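(* Let $\gamma$ be a non-polyhedral gauge on $\mathbb{R}^2$. Then there exist $a,b\in\mathbb{R}^2$ such that $\mathrm{EH}_\gamma(\{a,b\})$ is unbounded.
   Context: A gauge $\gamma$ on $\mathbb{R}^d$ is the Minkowski functional of a convex compact set $B_\gamma$ with the origin in its interior (not necessarily symmetric); it is polyhedral if $B_\gamma$ is a polytope. $\gamma^\circ$ is the dual gauge with unit ball $B_{\gamma^\circ}$. For $u\in B_{\gamma^\circ}$: if $\gamma^\circ(u)=1$, $N(u)=\mathbb{R}_{\ge0}F(u)$ with $F(u)=\{x\in B_\gamma:\langle u,x\rangle=1\}$; otherwise $N(u)=\{0\}$. For finite $S$ and $\pi=(u_s)_{s\in S}\subset B_{\gamma^\circ}$, $C_\pi=\bigcap_{s\in S}(s+N(u_s))$; a nonempty $C_\pi$ is an elementary convex set for $S$; the elementary hull $\mathrm{EH}_\gamma(S)$ is the union of all bounded elementary convex sets for $S$. *)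

theory Defs
  imports "HOL-Analysis.Analysis"
begin

definition minkowski_functional :: "('a::real_normed_vector) set \<Rightarrow> 'a \<Rightarrow> real" where
  "minkowski_functional B x = Inf {t. t > 0 \<and> x \<in> (\<lambda>y. t *\<^sub>R y) ` B}"

definition is_gauge :: "('a::euclidean_space \<Rightarrow> real) \<Rightarrow> bool" where
  "is_gauge \<gamma> \<longleftrightarrow> (\<exists>B. convex B \<and> compact B \<and> 0 \<in> interior B \<and> \<gamma> = minkowski_functional B)"

definition gauge_ball :: "('a::euclidean_space \<Rightarrow> real) \<Rightarrow> 'a set" where
  "gauge_ball \<gamma> = {x. \<gamma> x \<le> 1}"

definition polyhedral_gauge :: "('a::euclidean_space \<Rightarrow> real) \<Rightarrow> bool" where
  "polyhedral_gauge \<gamma> \<longleftrightarrow> polytope (gauge_ball \<gamma>)"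

definition dual_gauge :: "('a::euclidean_space \<Rightarrow> real) \<Rightarrow> 'a \<Rightarrow> real" where
  "dual_gauge \<gamma> u = Sup ((\<lambda>x. u \<bullet> x) ` gauge_ball \<gamma>)"

definition face_F :: "('a::euclidean_space \<Rightarrow> real) \<Rightarrow> 'a \<Rightarrow> 'a set" where
  "face_F \<gamma> u = {x \<in> gauge_ball \<gamma>. u \<bullet> x = 1}"

definition cone_N :: "('a::euclidean_space \<Rightarrow> real) \<Rightarrow> 'a \<Rightarrow> 'a set" where
  "cone_N \<gamma> u = (if dual_gauge \<gamma> u = 1
     then {t *\<^sub>R x | t x. t \<ge> 0 \<and> x \<in> face_F \<gamma> u} else {0})"

definition C_pi :: "('a::euclidean_space \<Rightarrow> real) \<Rightarrow> 'a set \<Rightarrow> ('a \<Rightarrow> 'a) \<Rightarrow> 'a set" where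
  "C_pi \<gamma> S \<pi> = (\<Inter>s\<in>S. (\<lambda>y. s + y) ` cone_N \<gamma> (\<pi> s))"

definition elementary_hull :: "('a::euclidean_space \<Rightarrow> real) \<Rightarrow> 'a set \<Rightarrow> 'a set" where
  "elementary_hull \<gamma> S = \<Union>{C_pi \<gamma> S \<pi> | \<pi>.
     (\<forall>s\<in>S. dual_gauge \<gamma> (\<pi> s) \<le> 1) \<and> C_pi \<gamma> S \<pi> \<noteq> {} \<and> bounded (C_pi \<gamma> S \<pi>)}"

end

theory Submission
  imports Defs
begin

text \<open>A convex body \<open>S\<close> that is not a polytope has infinitely many extreme points
  (Krein--Milman), hence a limit point \<open>p \<noteq> 0\<close> of extreme points.  Take four extreme points
  \<open>e\<^sub>1, \<dots>, e\<^sub>4\<close> \<open>\<epsilon>\<close>-close to \<open>p\<close>, in angular order, and supporting functionals \<open>u\<close>, \<open>v\<close>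
  at the boundary points on the rays through \<open>q = e\<^sub>1 + e\<^sub>2\<close> and \<open>q' = e\<^sub>3 + e\<^sub>4\<close>.
  Extremality confines the face \<open>F(u)\<close> to the sector spanned by \<open>e\<^sub>1, e\<^sub>2\<close> and \<open>F(v)\<close> to the
  one spanned by \<open>e\<^sub>3, e\<^sub>4\<close>, so for \<open>b\<close> the rotation of \<open>p\<close> by a right angle the elementary
  set \<open>N(u) \<inter> (b + N(v))\<close> is bounded.  It contains the point where the rays \<open>\<real>\<^sub>\<ge>\<^sub>0 q\<close>
  and \<open>b + \<real>\<^sub>\<ge>\<^sub>0 q'\<close> meet, and since \<open>q\<close> and \<open>q'\<close> are almost parallel this point has norm
  of order \<open>|p|\<^sup>2 / \<epsilon>\<close>.\<close>

definition det2 :: "real^2 \<Rightarrow> real^2 \<Rightarrow> real" where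
  "det2 x y = x$1 * y$2 - x$2 * y$1"

lemma inner_vec2: "(x::real^2) \<bullet> y = x$1 * y$1 + x$2 * y$2"
  by (simp add: inner_vec_def sum_2)

lemma vec2_eq_iff: "(x::real^2) = y \<longleftrightarrow> x$1 = y$1 \<and> x$2 = y$2"
  by (simp add: vec_eq_iff forall_2)

lemma det2_add_left [simp]: "det2 (x + y) z = det2 x z + det2 y z"
  and det2_add_right [simp]: "det2 z (x + y) = det2 z x + det2 z y"
  and det2_diff_left [simp]: "det2 (x - y) z = det2 x z - det2 y z"
  and det2_diff_right [simp]: "det2 z (x - y) = det2 z x - det2 z y"
  and det2_scaleR_left [simp]: "det2 (c *\<^sub>R x) z = c * det2 x z"
  and det2_scaleR_right [simp]: "det2 z (c *\<^sub>R x) = c * det2 z x"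
  and det2_uminus_left [simp]: "det2 (- x) z = - det2 x z"
  and det2_uminus_right [simp]: "det2 z (- x) = - det2 z x"
  and det2_zero_left [simp]: "det2 0 z = 0"
  and det2_zero_right [simp]: "det2 z 0 = 0"
  and det2_self [simp]: "det2 x x = 0"
  by (simp_all add: det2_def algebra_simps)

lemma det2_swap: "det2 y x = - det2 x y"
  by (simp add: det2_def)

lemma det2_cramer: "det2 x y *\<^sub>R z = det2 z y *\<^sub>R x + det2 x z *\<^sub>R y"
  by (simp add: vec2_eq_iff det2_def algebra_simps)

lemma det2_inner_identity: "(p \<bullet> x) * det2 p y - (p \<bullet> y) * det2 p x = (p \<bullet> p) * det2 x y"
  by (simp add: inner_vec2 det2_def algebra_simps)

lemma det2_abs_le: "\<bar>det2 x y\<bar> \<le> norm x * norm y"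
proof -
  have "(det2 x y)\<^sup>2 + (x \<bullet> y)\<^sup>2 = (norm x * norm y)\<^sup>2"
    unfolding power_mult_distrib power2_norm_eq_inner inner_vec2 det2_def
    by (simp add: power2_eq_square algebra_simps)
  then have "(det2 x y)\<^sup>2 \<le> (norm x * norm y)\<^sup>2"
    by (metis le_add_same_cancel1 zero_le_power2)
  then show ?thesis
    using abs_le_square_iff[of "det2 x y" "norm x * norm y"] by simp
qed

definition rot90 :: "real^2 \<Rightarrow> real^2" where
  "rot90 p = vector [p$2, - p$1]"

lemma det2_rot90_left: "det2 (rot90 p) x = p \<bullet> x"
  by (simp add: rot90_def det2_def inner_vec2)

lemma extreme_point_scaleR_le_1:
  fixes S :: "'a::real_vector set"
  assumes "e extreme_point_of S" "0 \<in> S" "e \<noteq> 0" "l *\<^sub>R e \<in> S" "0 \<le> l"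
  shows "l \<le> 1"
proof (rule ccontr)
  assume "\<not> l \<le> 1"
  then have "e = (1 - 1/l) *\<^sub>R 0 + (1/l) *\<^sub>R (l *\<^sub>R e)" "0 \<noteq> l *\<^sub>R e"
    using assms(3) by auto
  moreover have "0 < 1/l" "1/l < 1"
    using \<open>\<not> l \<le> 1\<close> by auto
  ultimately have "e \<in> open_segment 0 (l *\<^sub>R e)"
    unfolding in_segment by blast
  then show False
    using assms(1,2,4) unfolding extreme_point_of_def by blast
qed

lemma extreme_points_on_same_ray:
  fixes S :: "'a::real_vector set"
  assumes "e extreme_point_of S" "e' extreme_point_of S" "0 \<in> S" "e \<noteq> 0"
    and "e' = l *\<^sub>R e" "0 < l"
  shows "e' = e"
proof -
  have "l \<le> 1"
    using assms extreme_point_scaleR_le_1[of e S l] extreme_point_of_def by auto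
  moreover have "e = (1/l) *\<^sub>R e'" "e' \<noteq> 0"
    using assms(4-6) by auto
  then have "1/l \<le> 1"
    using assms extreme_point_scaleR_le_1[of e' S "1/l"] extreme_point_of_def by auto
  ultimately show ?thesis
    using assms(5,6) by simp
qed

lemma extreme_point_norm_ge:
  fixes S :: "'a::{real_normed_vector, perfect_space} set"
  assumes "ball 0 r \<subseteq> S" "e extreme_point_of S"
  shows "r \<le> norm e"
proof (rule ccontr)
  assume "\<not> r \<le> norm e"
  then have "e \<in> interior S"
    using interior_maximal[OF assms(1) open_ball] by (simp add: subset_iff)
  then show False
    using extreme_point_not_in_interior[OF assms(2)] by blast
qed

text \<open>The ray through \<open>e\<close> leaves \<open>S\<close> at \<open>e\<close>, so the meeting point is \<open>e\<close> itself, which would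
  then lie strictly inside a segment of \<open>S\<close>.\<close>
lemma face_segment_misses_extreme_ray:
  fixes S :: "'a::real_inner set"
  assumes S: "convex S" "0 \<in> S" and e: "e extreme_point_of S"
    and u: "\<And>x. x \<in> S \<Longrightarrow> u \<bullet> x \<le> 1"
    and ab: "a \<in> S" "b \<in> S" "u \<bullet> a = 1" "u \<bullet> b = 1" "a \<noteq> b"
    and \<tau>: "0 < \<tau>" "\<tau> < 1"
    and ray: "(1 - \<tau>) *\<^sub>R a + \<tau> *\<^sub>R b = \<mu> *\<^sub>R e" "0 \<le> \<mu>"
  shows False
proof -
  define g where "g = (1 - \<tau>) *\<^sub>R a + \<tau> *\<^sub>R b"
  have "g \<in> S"
    using convexD[OF S(1) ab(1,2)] \<tau> by (simp add: g_def)
  have "\<mu> * (u \<bullet> e) = 1"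
    using ab(3,4) arg_cong[OF ray(1), of "inner u"] by (simp add: algebra_simps)
  moreover have "u \<bullet> e \<le> 1"
    using u e extreme_point_of_def by blast
  ultimately have "1 \<le> \<mu>" "e \<noteq> 0"
    using ray(2) mult_left_le[of "u \<bullet> e" \<mu>] by auto
  moreover have "\<mu> \<le> 1"
    using extreme_point_scaleR_le_1[OF e S(2)] \<open>g \<in> S\<close> ray \<open>e \<noteq> 0\<close> by (simp add: g_def)
  ultimately have "e = g"
    using ray(1) by (simp add: g_def)
  then have "e \<in> open_segment a b"
    using ab(5) \<tau> unfolding in_segment g_def by blast
  then show False
    using e ab(1,2) unfolding extreme_point_of_def by blast
qed

lemma face_in_sector:
  fixes S :: "(real^2) set"
  assumes S: "convex S" "0 \<in> S"
    and e: "e1 extreme_point_of S" "e2 extreme_point_of S" "0 < det2 e1 e2"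
    and u: "\<And>x. x \<in> S \<Longrightarrow> u \<bullet> x \<le> 1"
    and a: "a \<in> S" "u \<bullet> a = 1" "0 < det2 e1 a" "0 < det2 a e2"
    and f: "f \<in> S" "u \<bullet> f = 1"
  shows "0 \<le> det2 e1 f \<and> 0 \<le> det2 f e2"
proof (rule ccontr)
  assume out: "\<not> ?thesis"
  define g where "g \<tau> = (1 - \<tau>) *\<^sub>R a + \<tau> *\<^sub>R f" for \<tau>
  \<comment> \<open>\<open>h\<close> measures how far \<open>g \<tau>\<close> is inside the sector; at its zero the segment crosses a bounding ray.\<close>
  define h where "h \<tau> = min ((1 - \<tau>) * det2 e1 a + \<tau> * det2 e1 f) ((1 - \<tau>) * det2 a e2 + \<tau> * det2 f e2)"
    for \<tau> :: real
  have h_g: "h \<tau> = min (det2 e1 (g \<tau>)) (det2 (g \<tau>) e2)" for \<tau>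
    by (simp add: h_def g_def)
  have "h 1 < 0" "0 < h 0"
    using out a by (auto simp: h_def)
  moreover have "isCont h \<tau>" for \<tau>
    unfolding h_def by (intro continuous_intros)
  ultimately obtain \<tau> where \<tau>: "0 \<le> \<tau>" "\<tau> \<le> 1" "h \<tau> = 0"
    using IVT2[of h 1 0 0] by auto
  with \<open>h 1 < 0\<close> \<open>0 < h 0\<close> have \<tau>01: "0 < \<tau>" "\<tau> < 1"
    by (auto simp: order_le_less)
  have "a \<noteq> f"
    using \<open>h 1 < 0\<close> \<open>0 < h 0\<close> by (auto simp: h_g g_def)
  have on_ray: False if "g \<tau> = \<mu> *\<^sub>R e" "0 \<le> \<mu>" "e extreme_point_of S" for e \<mu>
    using face_segment_misses_extreme_ray[OF S that(3) u a(1) f(1) a(2) f(2) \<open>a \<noteq> f\<close> \<tau>01 _ that(2)]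
      that(1) by (simp add: g_def)
  have cramer: "det2 e1 e2 *\<^sub>R g \<tau> = det2 (g \<tau>) e2 *\<^sub>R e1 + det2 e1 (g \<tau>) *\<^sub>R e2"
    by (rule det2_cramer)
  consider "det2 e1 (g \<tau>) = 0" "0 \<le> det2 (g \<tau>) e2" | "det2 (g \<tau>) e2 = 0" "0 \<le> det2 e1 (g \<tau>)"
    using \<tau>(3) unfolding h_g by linarith
  then show False
  proof cases
    case 1
    then have "g \<tau> = (det2 (g \<tau>) e2 / det2 e1 e2) *\<^sub>R e1"
      using cramer e(3) by (simp add: eq_vector_fraction_iff)
    then show False
      using on_ray 1(2) e(1,3) by (meson divide_nonneg_pos)
  next
    case 2
    then have "g \<tau> = (det2 e1 (g \<tau>) / det2 e1 e2) *\<^sub>R e2"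
      using cramer e(3) by (simp add: eq_vector_fraction_iff)
    then show False
      using on_ray 2(2) e(2,3) by (meson divide_nonneg_pos)
  qed
qed

lemma det2_sector_lower_bound:
  assumes e: "0 < det2 e1 e2" "0 < det2 e1 e3" "0 < det2 e2 e3"
    and u: "u \<bullet> e1 \<le> 1" "u \<bullet> e2 \<le> 1" "u \<bullet> f = 1"
    and f: "0 \<le> det2 e1 f" "0 \<le> det2 f e2"
  shows "min (det2 e1 e3) (det2 e2 e3) \<le> det2 f e3"
proof -
  define m where "m = min (det2 e1 e3) (det2 e2 e3)"
  have "0 < m"
    using e by (simp add: m_def)
  have cramer: "det2 e1 e2 *\<^sub>R f = det2 f e2 *\<^sub>R e1 + det2 e1 f *\<^sub>R e2"
    by (rule det2_cramer)
  have "det2 e1 e2 = det2 f e2 * (u \<bullet> e1) + det2 e1 f * (u \<bullet> e2)"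
    using arg_cong[OF cramer, of "inner u"] u(3) by (simp add: inner_add_right)
  also have "\<dots> \<le> det2 f e2 + det2 e1 f"
    using u f by (intro add_mono mult_left_le) auto
  finally have "det2 e1 e2 * m \<le> (det2 f e2 + det2 e1 f) * m"
    using \<open>0 < m\<close> by simp
  also have "\<dots> \<le> det2 f e2 * det2 e1 e3 + det2 e1 f * det2 e2 e3"
    using f by (simp add: distrib_right add_mono mult_left_mono m_def)
  also have "\<dots> = det2 e1 e2 * det2 f e3"
    using arg_cong[OF cramer, of "\<lambda>x. det2 x e3"] by simp
  finally show ?thesis
    using e(1) by (simp add: m_def)
qed

lemma det2_pos_if_slope_less:
  fixes p x y :: "real^2"
  assumes "0 < p \<bullet> x" "0 < p \<bullet> y" "det2 p x / (p \<bullet> x) < det2 p y / (p \<bullet> y)"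
  shows "0 < det2 x y"
proof -
  have "det2 p x * (p \<bullet> y) < det2 p y * (p \<bullet> x)"
    using assms by (simp add: field_simps)
  then have "0 < (p \<bullet> p) * det2 x y"
    using det2_inner_identity[of p x y] by (simp add: algebra_simps)
  then show ?thesis
    using inner_ge_zero[of p] by (auto simp: zero_less_mult_iff)
qed

lemma inner_scaleR_diff_eq_det2:
  fixes p x y :: "real^2"
  shows "(p \<bullet> x) *\<^sub>R y - (p \<bullet> y) *\<^sub>R x = - det2 x y *\<^sub>R rot90 p"
  by (simp add: vec2_eq_iff inner_vec2 det2_def rot90_def algebra_simps)

lemma eq_scaleR_if_slope_eq:
  fixes p x y :: "real^2"
  assumes "0 < p \<bullet> x" "0 < p \<bullet> y" "det2 p x / (p \<bullet> x) = det2 p y / (p \<bullet> y)"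
  shows "y = ((p \<bullet> y) / (p \<bullet> x)) *\<^sub>R x"
proof -
  have "det2 p x * (p \<bullet> y) = det2 p y * (p \<bullet> x)"
    using assms by (simp add: field_simps)
  then have "(p \<bullet> p) * det2 x y = 0"
    using det2_inner_identity[of p x y] by (simp add: algebra_simps)
  moreover have "p \<noteq> 0"
    using assms(1) by auto
  ultimately have "(p \<bullet> x) *\<^sub>R y = (p \<bullet> y) *\<^sub>R x"
    using inner_scaleR_diff_eq_det2[of p x y] by simp
  then show ?thesis
    using assms(1) by (simp add: eq_vector_fraction_iff)
qed

lemma infinite_obtains_four_increasing:
  fixes A :: "'a::linorder set"
  assumes "infinite A"
  obtains a b c d where "a \<in> A" "b \<in> A" "c \<in> A" "d \<in> A" "a < b" "b < c" "c < d"
proof -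
  obtain F where F: "finite F" "card F = 4" "F \<subseteq> A"
    using infinite_arbitrarily_large[OF assms] by blast
  define L where "L = sorted_list_of_set F"
  have "length L = 4" "sorted_wrt (<) L" "set L \<subseteq> A"
    using F by (simp_all add: L_def)
  then have mem: "L ! i \<in> A" if "i < 4" for i
    using that nth_mem by fastforce
  have less: "L ! i < L ! Suc i" if "i < 3" for i
    using that \<open>length L = 4\<close> \<open>sorted_wrt (<) L\<close> by (simp add: sorted_wrt_iff_nth_less)
  show ?thesis
    using that[of "L ! 0" "L ! 1" "L ! 2" "L ! 3"] mem[of 0] mem[of 1] mem[of 2] mem[of 3]
      less[of 0] less[of 1] less[of 2] by (simp add: numeral_eq_Suc)
qed

lemma interior_scaleR_absorbs:
  fixes S :: "'a::real_normed_vector set"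
  assumes "0 \<in> interior S"
  obtains t where "0 < t" "x \<in> (\<lambda>y. t *\<^sub>R y) ` S"
proof -
  obtain r where r: "r > 0" "ball 0 r \<subseteq> S"
    using assms mem_interior by blast
  define k where "k = norm x + 1"
  have k: "0 < k" "norm x < k"
    using norm_ge_zero[of x] unfolding k_def by linarith+
  have "norm ((r / k) *\<^sub>R x) = r * (norm x / k)"
    using r k by simp
  also have "\<dots> < r"
    using r k mult_strict_left_mono[of "norm x / k" 1 r] by simp
  finally have "(r / k) *\<^sub>R x \<in> S"
    using r(2) by auto
  moreover have "x = (k / r) *\<^sub>R ((r / k) *\<^sub>R x)"
    using r k by simp
  ultimately have "x \<in> (\<lambda>y. (k / r) *\<^sub>R y) ` S"
    by (rule rev_image_eqI)
  then show ?thesis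
    using that[of "k / r"] r k by simp
qed

lemma mem_if_minkowski_functional_le_1:
  fixes S :: "'a::real_normed_vector set"
  assumes S: "convex S" "closed S" "0 \<in> interior S" and "minkowski_functional S x \<le> 1"
  shows "x \<in> S"
proof -
  define T where "T = {t. t > 0 \<and> x \<in> (\<lambda>y. t *\<^sub>R y) ` S}"
  have "Inf T \<le> 1"
    using assms(4) by (simp add: minkowski_functional_def T_def)
  have "0 \<in> S"
    using S(3) interior_subset by blast
  obtain t0 where "0 < t0" "x \<in> (\<lambda>y. t0 *\<^sub>R y) ` S"
    by (rule interior_scaleR_absorbs[OF S(3)])
  then have "T \<noteq> {}"
    by (auto simp: T_def)
  have shrink: "inverse s *\<^sub>R x \<in> S" if "Inf T < s" for s
  proof -
    have "bdd_below T"
      by (rule bdd_belowI[of _ 0]) (auto simp: T_def)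
    then obtain t y where t: "0 < t" "t < s" "y \<in> S" "x = t *\<^sub>R y"
      using \<open>Inf T < s\<close> cInf_less_iff[OF \<open>T \<noteq> {}\<close>] by (auto simp: T_def)
    then have "(t / s) *\<^sub>R y + (1 - t / s) *\<^sub>R 0 \<in> S"
      by (intro convexD[OF S(1) t(3) \<open>0 \<in> S\<close>]) auto
    then show ?thesis
      using t by (simp add: divide_inverse_commute)
  qed
  have "(\<lambda>n. inverse (1 + inverse (real (Suc n))) *\<^sub>R x) \<longlonglongrightarrow> inverse (1 + 0) *\<^sub>R x"
    by (intro tendsto_intros LIMSEQ_inverse_real_of_nat) auto
  moreover have "inverse (1 + inverse (real (Suc n))) *\<^sub>R x \<in> S" for n
  proof (rule shrink)
    have "0 < inverse (real (Suc n))"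
      by simp
    then show "Inf T < 1 + inverse (real (Suc n))"
      using \<open>Inf T \<le> 1\<close> by linarith
  qed
  ultimately show "x \<in> S"
    using closed_sequentially[OF S(2)] by (metis inverse_1 scaleR_one add_0_right)
qed

lemma gauge_ball_minkowski_functional:
  fixes S :: "'a::euclidean_space set"
  assumes S: "convex S" "compact S" "0 \<in> interior S"
  shows "gauge_ball (minkowski_functional S) = S"
proof (intro set_eqI iffI)
  fix x
  show "x \<in> S" if "x \<in> gauge_ball (minkowski_functional S)"
    using that mem_if_minkowski_functional_le_1[OF S(1) compact_imp_closed[OF S(2)] S(3)]
    by (simp add: gauge_ball_def)
  show "x \<in> gauge_ball (minkowski_functional S)" if "x \<in> S"
  proof -
    have "1 \<in> {t. t > 0 \<and> x \<in> (\<lambda>y. t *\<^sub>R y) ` S}"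
      using that by force
    then have "Inf {t. t > 0 \<and> x \<in> (\<lambda>y. t *\<^sub>R y) ` S} \<le> 1"
      by (rule cInf_lower) (rule bdd_belowI[of _ 0], auto)
    then show ?thesis
      by (simp add: gauge_ball_def minkowski_functional_def)
  qed
qed

lemma supporting_functional_on_ray:
  fixes S :: "'a::euclidean_space set"
  assumes S: "convex S" "compact S" "0 \<in> interior S" and "q \<noteq> 0"
  obtains c u where "0 < c" "c *\<^sub>R q \<in> S" "u \<bullet> (c *\<^sub>R q) = 1" "\<And>x. x \<in> S \<Longrightarrow> u \<bullet> x \<le> 1"
proof -
  obtain c where c: "0 < c" "c *\<^sub>R q \<in> frontier S"
    using ray_to_frontier[OF compact_imp_bounded[OF S(2)] S(3) \<open>q \<noteq> 0\<close>] by auto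
  define x where "x = c *\<^sub>R q"
  have "x \<in> S"
    using c frontier_subset_closed[OF compact_imp_closed[OF S(2)]] by (auto simp: x_def)
  moreover have "x \<notin> rel_interior S"
    using c rel_interior_nonempty_interior[of S] S(3) by (auto simp: x_def frontier_def)
  ultimately obtain a where a: "a \<noteq> 0" "\<And>y. y \<in> closure S \<Longrightarrow> a \<bullet> x \<le> a \<bullet> y"
    using supporting_hyperplane_relative_frontier[OF S(1) closure_subset[THEN subsetD]] by metis
  have le: "- a \<bullet> y \<le> - a \<bullet> x" if "y \<in> S" for y
    using a(2)[of y] that closure_subset by auto
  obtain r where r: "r > 0" "ball 0 r \<subseteq> S"
    using S(3) mem_interior by blast
  define z where "z = (r / (2 * norm a)) *\<^sub>R (- a)"
  have "norm z < r"
    using r a(1) by (simp add: z_def)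
  then have "0 < - a \<bullet> z"
    using r a(1) by (simp add: z_def)
  also have "\<dots> \<le> - a \<bullet> x"
    using le r(2) \<open>norm z < r\<close> by auto
  finally have pos: "0 < - a \<bullet> x" .
  show ?thesis
  proof (rule that[of c "(1 / (- a \<bullet> x)) *\<^sub>R (- a)"])
    show "(1 / (- a \<bullet> x)) *\<^sub>R (- a) \<bullet> (c *\<^sub>R q) = 1"
      using pos by (simp add: x_def[symmetric])
    show "(1 / (- a \<bullet> x)) *\<^sub>R (- a) \<bullet> y \<le> 1" if "y \<in> S" for y
      using le[OF that] pos by (simp add: divide_le_eq_1)
  qed (use c(1) \<open>x \<in> S\<close> x_def in auto)
qed

lemma extreme_points_accumulate_off_origin:
  fixes S :: "'a::euclidean_space set"
  assumes S: "convex S" "compact S" "0 \<in> interior S" and "\<not> polytope S"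
  obtains p where "p \<noteq> 0" "p islimpt {x. x extreme_point_of S}"
proof -
  define E where "E = {x. x extreme_point_of S}"
  have "infinite E"
    using Krein_Milman_Minkowski[OF S(2,1)] \<open>\<not> polytope S\<close> by (auto simp: polytope_def E_def)
  moreover have "E \<subseteq> S"
    by (auto simp: E_def extreme_point_of_def)
  ultimately obtain p where "p islimpt E"
    using Heine_Borel_imp_Bolzano_Weierstrass[OF S(2)] by blast
  moreover have "p \<noteq> 0"
  proof
    assume "p = 0"
    obtain r where "r > 0" "ball 0 r \<subseteq> S"
      using S(3) mem_interior by blast
    with \<open>p islimpt E\<close> \<open>p = 0\<close> obtain e where "e \<in> E" "dist e 0 < r"
      unfolding islimpt_approachable by blast
    then show False
      using extreme_point_norm_ge[OF \<open>ball 0 r \<subseteq> S\<close>] by (force simp: E_def)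
  qed
  ultimately show ?thesis
    using that by (simp add: E_def)
qed

lemma inner_pos_if_dist_less_norm:
  fixes p x :: "'a::real_inner"
  assumes "dist x p < norm p"
  shows "0 < p \<bullet> x"
proof -
  have "p \<bullet> (p - x) \<le> norm p * norm (p - x)"
    by (rule norm_cauchy_schwarz)
  also have "\<dots> < norm p * norm p"
    using assms zero_le_dist[of x p] by (intro mult_strict_left_mono) (auto simp: dist_norm norm_minus_commute)
  finally show ?thesis
    by (simp add: inner_diff_right dot_square_norm power2_eq_square)
qed

lemma extreme_points_in_angular_order:
  fixes S :: "(real^2) set"
  assumes "0 \<in> S" "p islimpt {x. x extreme_point_of S}" "0 < \<epsilon>" "\<epsilon> \<le> norm p"
  obtains e1 e2 e3 e4
  where "\<forall>e\<in>{e1, e2, e3, e4}. e extreme_point_of S \<and> dist e p < \<epsilon>"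
    and "0 < det2 e1 e2" "0 < det2 e1 e3" "0 < det2 e1 e4"
    and "0 < det2 e2 e3" "0 < det2 e2 e4" "0 < det2 e3 e4"
proof -
  define T where "T = {x. x extreme_point_of S} \<inter> ball p \<epsilon>"
  have "infinite T"
    using assms(2,3) by (simp add: T_def islimpt_eq_infinite_ball)
  have pos: "0 < p \<bullet> x" if "x \<in> T" for x
    using that assms(4) inner_pos_if_dist_less_norm[of x p] by (auto simp: T_def dist_commute)
  define \<theta> where "\<theta> x = det2 p x / (p \<bullet> x)" for x
  have "inj_on \<theta> T"
  proof (rule inj_onI)
    fix x y
    assume "x \<in> T" "y \<in> T" "\<theta> x = \<theta> y"
    then have "y = ((p \<bullet> y) / (p \<bullet> x)) *\<^sub>R x"
      using eq_scaleR_if_slope_eq pos by (simp add: \<theta>_def)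
    moreover have "x \<noteq> 0" "0 < (p \<bullet> y) / (p \<bullet> x)"
      using pos[OF \<open>x \<in> T\<close>] pos[OF \<open>y \<in> T\<close>] by auto
    moreover have "x extreme_point_of S" "y extreme_point_of S"
      using \<open>x \<in> T\<close> \<open>y \<in> T\<close> by (auto simp: T_def)
    ultimately have "y = x"
      using extreme_points_on_same_ray[of x S y "(p \<bullet> y) / (p \<bullet> x)"] assms(1) by blast
    then show "x = y"
      by simp
  qed
  then have "infinite (\<theta> ` T)"
    using \<open>infinite T\<close> finite_imageD by blast
  then obtain a1 a2 a3 a4 where "a1 \<in> \<theta> ` T" "a2 \<in> \<theta> ` T" "a3 \<in> \<theta> ` T" "a4 \<in> \<theta> ` T"
    "a1 < a2" "a2 < a3" "a3 < a4"
    by (rule infinite_obtains_four_increasing)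
  then obtain e1 e2 e3 e4 where e: "e1 \<in> T" "e2 \<in> T" "e3 \<in> T" "e4 \<in> T"
    and \<theta>: "\<theta> e1 < \<theta> e2" "\<theta> e2 < \<theta> e3" "\<theta> e3 < \<theta> e4"
    by blast
  have less: "0 < det2 x y" if "x \<in> T" "y \<in> T" "\<theta> x < \<theta> y" for x y
    using det2_pos_if_slope_less[OF pos pos] that by (simp add: \<theta>_def)
  show ?thesis
  proof (rule that)
    show "\<forall>e\<in>{e1, e2, e3, e4}. e extreme_point_of S \<and> dist e p < \<epsilon>"
      using e by (auto simp: T_def dist_commute)
  qed (use e \<theta> in \<open>auto intro: less\<close>)
qed

lemma inner_ge_if_near_double:
  fixes p w :: "'a::real_inner"
  assumes "norm (w - 2 *\<^sub>R p) \<le> \<delta>" "\<delta> \<le> norm p"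
  shows "(norm p)\<^sup>2 \<le> p \<bullet> w"
proof -
  have "p \<bullet> (2 *\<^sub>R p - w) \<le> norm p * norm (2 *\<^sub>R p - w)"
    by (rule norm_cauchy_schwarz)
  also have "\<dots> \<le> norm p * norm p"
    using assms by (intro mult_left_mono) (auto simp: norm_minus_commute)
  finally show ?thesis
    by (simp add: inner_diff_right dot_square_norm power2_eq_square)
qed

lemma far_point_estimate:
  fixes p q q' :: "real^2"
  assumes D: "0 < det2 q q'"
    and near: "norm (q - 2 *\<^sub>R p) \<le> \<delta>" "norm (q' - 2 *\<^sub>R p) \<le> \<delta>" and "\<delta> \<le> norm p"
  shows "(norm p)\<^sup>2 / (6 * \<delta>) \<le> (p \<bullet> q' / det2 q q') * norm q"
proof -
  have "0 \<le> \<delta>"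
    using near(1) norm_ge_zero order_trans by blast
  have "norm (q - q') \<le> 2 * \<delta>"
    using norm_triangle_ineq4[of "q - 2 *\<^sub>R p" "q' - 2 *\<^sub>R p"] near by simp
  moreover have "norm q' \<le> 3 * norm p"
    using norm_triangle_ineq[of "2 *\<^sub>R p" "q' - 2 *\<^sub>R p"] near(2) \<open>\<delta> \<le> norm p\<close> by simp
  ultimately have "norm (q - q') * norm q' \<le> (2 * \<delta>) * (3 * norm p)"
    using \<open>0 \<le> \<delta>\<close> by (intro mult_mono) auto
  moreover have "det2 q q' \<le> norm (q - q') * norm q'"
    using det2_abs_le[of "q - q'" q'] by simp
  ultimately have D_le: "det2 q q' \<le> 6 * \<delta> * norm p"
    by simp
  then have "0 < \<delta> * norm p"
    using D by linarith
  then have "0 < \<delta>" "0 < norm p"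
    using \<open>0 \<le> \<delta>\<close> by (auto simp: zero_less_mult_iff)
  have "norm p \<le> norm q"
    using norm_triangle_ineq2[of "2 *\<^sub>R p" q] near(1) \<open>\<delta> \<le> norm p\<close> by (simp add: norm_minus_commute)
  have "(norm p)\<^sup>2 \<le> p \<bullet> q'"
    by (rule inner_ge_if_near_double[OF near(2) \<open>\<delta> \<le> norm p\<close>])
  then have "0 \<le> p \<bullet> q'"
    using zero_le_power2 order_trans by blast
  from \<open>(norm p)\<^sup>2 \<le> p \<bullet> q'\<close> have "(norm p)\<^sup>2 * norm p \<le> (p \<bullet> q') * norm q"
    using \<open>norm p \<le> norm q\<close> \<open>0 \<le> p \<bullet> q'\<close> by (intro mult_mono) auto
  then have "((norm p)\<^sup>2 * norm p) / (6 * \<delta> * norm p) \<le> ((p \<bullet> q') * norm q) / det2 q q'"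
    using D D_le \<open>0 < norm p\<close> \<open>0 \<le> p \<bullet> q'\<close> by (intro frac_le) auto
  then show ?thesis
    using \<open>0 < norm p\<close> by simp
qed

lemma rot90_cramer:
  fixes p q q' :: "real^2"
  assumes "det2 q q' \<noteq> 0"
  shows "rot90 p = (p \<bullet> q' / det2 q q') *\<^sub>R q - (p \<bullet> q / det2 q q') *\<^sub>R q'"
proof -
  have "rot90 p = inverse (det2 q q') *\<^sub>R (det2 q q' *\<^sub>R rot90 p)"
    using assms by simp
  also have "\<dots> = inverse (det2 q q') *\<^sub>R ((p \<bullet> q') *\<^sub>R q - (p \<bullet> q) *\<^sub>R q')"
    using det2_cramer[of q q' "rot90 p"] by (simp add: det2_rot90_left det2_swap[of q])
  finally show ?thesis
    by (simp add: scaleR_diff_right divide_inverse mult.commute)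
qed

definition face_cone :: "'a::real_inner set \<Rightarrow> 'a \<Rightarrow> 'a set" where
  "face_cone S u = {t *\<^sub>R x | t x. 0 \<le> t \<and> x \<in> S \<and> u \<bullet> x = 1}"

lemma scaleR_mem_face_cone:
  assumes "0 \<le> t" "0 < c" "c *\<^sub>R q \<in> S" "u \<bullet> (c *\<^sub>R q) = 1"
  shows "t *\<^sub>R q \<in> face_cone S u"
  unfolding face_cone_def
  using assms by (intro CollectI exI[of _ "t / c"] exI[of _ "c *\<^sub>R q"]) simp

lemma bounded_face_cone_inter_translate:
  fixes S :: "(real^2) set"
  assumes "bounded S"
    and e: "0 < det2 e1 e2" "0 < det2 e1 e3" "0 < det2 e2 e3" "e1 \<in> S" "e2 \<in> S"
    and u: "\<And>x. x \<in> S \<Longrightarrow> u \<bullet> x \<le> 1"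
    and u_face: "\<And>f. f \<in> S \<Longrightarrow> u \<bullet> f = 1 \<Longrightarrow> 0 \<le> det2 e1 f \<and> 0 \<le> det2 f e2"
    and v_face: "\<And>g. g \<in> S \<Longrightarrow> v \<bullet> g = 1 \<Longrightarrow> 0 \<le> det2 e3 g"
  shows "bounded (face_cone S u \<inter> (\<lambda>y. b + y) ` face_cone S v)"
proof -
  obtain R where R: "\<And>x. x \<in> S \<Longrightarrow> norm x \<le> R"
    using \<open>bounded S\<close> by (auto simp: bounded_iff)
  define m where "m = min (det2 e1 e3) (det2 e2 e3)"
  have "0 < m"
    using e by (simp add: m_def)
  have "norm z \<le> \<bar>det2 b e3\<bar> / m * R" if "z \<in> face_cone S u \<inter> (\<lambda>y. b + y) ` face_cone S v" for z
  proof -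
    have "z \<in> face_cone S u" "z - b \<in> face_cone S v"
      using that by auto
    then obtain \<tau> f \<sigma> g where f: "0 \<le> \<tau>" "f \<in> S" "u \<bullet> f = 1" "z = \<tau> *\<^sub>R f"
      and g: "0 \<le> \<sigma>" "g \<in> S" "v \<bullet> g = 1" "z - b = \<sigma> *\<^sub>R g"
      unfolding face_cone_def by blast
    have "m \<le> det2 f e3"
      unfolding m_def using e u[OF e(4)] u[OF e(5)] f(3) u_face[OF f(2,3)]
      by (intro det2_sector_lower_bound) auto
    then have "\<tau> * m \<le> det2 z e3"
      using f(1,4) by (simp add: mult_left_mono)
    also have "\<dots> = det2 b e3 - \<sigma> * det2 e3 g"
      using g(4) by (simp add: det2_swap[of g] algebra_simps)
    also have "\<dots> \<le> \<bar>det2 b e3\<bar>"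
      using mult_nonneg_nonneg[OF g(1) v_face[OF g(2,3)]] abs_ge_self[of "det2 b e3"] by linarith
    finally have "\<tau> \<le> \<bar>det2 b e3\<bar> / m"
      using \<open>0 < m\<close> by (simp add: le_divide_eq)
    moreover have "norm z = \<tau> * norm f"
      using f(1,4) by simp
    ultimately show ?thesis
      using mult_mono[of \<tau> "\<bar>det2 b e3\<bar> / m" "norm f" R] f(1) R[OF f(2)] \<open>0 < m\<close> by simp
  qed
  then show ?thesis
    unfolding bounded_iff by blast
qed

lemma dual_gauge_eq_1:
  assumes "gauge_ball \<gamma> = S" "\<And>x. x \<in> S \<Longrightarrow> u \<bullet> x \<le> 1" "x0 \<in> S" "u \<bullet> x0 = 1"
  shows "dual_gauge \<gamma> u = 1"
  unfolding dual_gauge_def assms(1) by (rule cSup_eq_maximum) (use assms in auto)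

lemma cone_N_eq_face_cone:
  assumes "gauge_ball \<gamma> = S" "dual_gauge \<gamma> u = 1"
  shows "cone_N \<gamma> u = face_cone S u"
  using assms by (auto simp: cone_N_def face_F_def face_cone_def)

lemma C_pi_origin_pair:
  "C_pi \<gamma> {0, b} \<pi> = cone_N \<gamma> (\<pi> 0) \<inter> (\<lambda>y. b + y) ` cone_N \<gamma> (\<pi> b)"
  by (simp add: C_pi_def)

lemma mem_elementary_hull_origin_pair:
  fixes \<gamma> :: "real^2 \<Rightarrow> real"
  assumes S: "convex S" "compact S" "0 \<in> interior S" and gb: "gauge_ball \<gamma> = S"
    and e: "e1 extreme_point_of S" "e2 extreme_point_of S" "e3 extreme_point_of S" "e4 extreme_point_of S"
    and order: "0 < det2 e1 e2" "0 < det2 e1 e3" "0 < det2 e1 e4"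
      "0 < det2 e2 e3" "0 < det2 e2 e4" "0 < det2 e3 e4"
    and b: "b = t *\<^sub>R (e1 + e2) - s *\<^sub>R (e3 + e4)" "0 \<le> t" "0 \<le> s" "b \<noteq> 0"
  shows "t *\<^sub>R (e1 + e2) \<in> elementary_hull \<gamma> {0, b}"
proof -
  have "0 \<in> S"
    using S(3) interior_subset by blast
  have eS: "e1 \<in> S" "e2 \<in> S"
    using e by (auto simp: extreme_point_of_def)
  have "e1 + e2 \<noteq> 0" "e3 + e4 \<noteq> 0"
    using order(1,6) by (auto simp: add_eq_0_iff)
  obtain c u
    where u: "0 < c" "c *\<^sub>R (e1 + e2) \<in> S" "u \<bullet> (c *\<^sub>R (e1 + e2)) = 1" "\<And>x. x \<in> S \<Longrightarrow> u \<bullet> x \<le> 1"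
    using supporting_functional_on_ray[OF S \<open>e1 + e2 \<noteq> 0\<close>] by blast
  obtain c' v
    where v: "0 < c'" "c' *\<^sub>R (e3 + e4) \<in> S" "v \<bullet> (c' *\<^sub>R (e3 + e4)) = 1" "\<And>x. x \<in> S \<Longrightarrow> v \<bullet> x \<le> 1"
    using supporting_functional_on_ray[OF S \<open>e3 + e4 \<noteq> 0\<close>] by blast
  have u_face: "0 \<le> det2 e1 f \<and> 0 \<le> det2 f e2" if "f \<in> S" "u \<bullet> f = 1" for f
    using face_in_sector[OF S(1) \<open>0 \<in> S\<close> e(1,2) order(1) u(4) u(2,3) _ _ that] u(1) order(1) by simp
  have v_face: "0 \<le> det2 e3 g \<and> 0 \<le> det2 g e4" if "g \<in> S" "v \<bullet> g = 1" for g
    using face_in_sector[OF S(1) \<open>0 \<in> S\<close> e(3,4) order(6) v(4) v(2,3) _ _ that] v(1) order(6) by simp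
  have duals: "dual_gauge \<gamma> u = 1" "dual_gauge \<gamma> v = 1"
    using dual_gauge_eq_1[OF gb] u v by blast+
  define \<pi> where "\<pi> x = (if x = 0 then u else v)" for x :: "real^2"
  have C: "C_pi \<gamma> {0, b} \<pi> = face_cone S u \<inter> (\<lambda>y. b + y) ` face_cone S v"
    unfolding C_pi_origin_pair using b(4) duals by (simp add: \<pi>_def cone_N_eq_face_cone[OF gb])
  have "bounded (C_pi \<gamma> {0, b} \<pi>)"
    unfolding C using v_face
    by (intro bounded_face_cone_inter_translate[OF compact_imp_bounded[OF S(2)] order(1,2,4) eS u(4) u_face])
      auto
  moreover have "t *\<^sub>R (e1 + e2) \<in> C_pi \<gamma> {0, b} \<pi>"
  proof -
    have "t *\<^sub>R (e1 + e2) - b \<in> face_cone S v"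
      using scaleR_mem_face_cone[OF b(3) v(1-3)] b(1) by simp
    then show ?thesis
      unfolding C using scaleR_mem_face_cone[OF b(2) u(1-3)] by (auto intro: rev_image_eqI)
  qed
  ultimately show ?thesis
    unfolding elementary_hull_def using duals
    by (intro UnionI[where X = "C_pi \<gamma> {0, b} \<pi>"]) (auto simp: \<pi>_def)
qed

lemma norm_add_sub_double_le:
  fixes x y p :: "'a::real_normed_vector"
  assumes "dist x p \<le> \<epsilon>" "dist y p \<le> \<epsilon>"
  shows "norm (x + y - 2 *\<^sub>R p) \<le> 2 * \<epsilon>"
proof -
  have "norm (x + y - 2 *\<^sub>R p) \<le> norm (x - p) + norm (y - p)"
    using norm_triangle_ineq[of "x - p" "y - p"] by (simp add: scaleR_2 algebra_simps)
  then show ?thesis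
    using assms by (simp add: dist_norm)
qed

lemma elementary_hull_far_point:
  fixes \<gamma> :: "real^2 \<Rightarrow> real"
  assumes S: "convex S" "compact S" "0 \<in> interior S" and gb: "gauge_ball \<gamma> = S"
    and p: "p \<noteq> 0" "p islimpt {x. x extreme_point_of S}"
    and \<epsilon>: "0 < \<epsilon>" "2 * \<epsilon> \<le> norm p"
  shows "\<exists>y \<in> elementary_hull \<gamma> {0, rot90 p}. (norm p)\<^sup>2 / (12 * \<epsilon>) \<le> norm y"
proof -
  have "0 \<in> S" "\<epsilon> \<le> norm p"
    using S(3) interior_subset \<epsilon> by auto
  obtain e1 e2 e3 e4 where near: "\<forall>e\<in>{e1, e2, e3, e4}. e extreme_point_of S \<and> dist e p < \<epsilon>"
    and order: "0 < det2 e1 e2" "0 < det2 e1 e3" "0 < det2 e1 e4"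
      "0 < det2 e2 e3" "0 < det2 e2 e4" "0 < det2 e3 e4"
    by (rule extreme_points_in_angular_order[OF \<open>0 \<in> S\<close> p(2) \<epsilon>(1) \<open>\<epsilon> \<le> norm p\<close>])
  define q q' where "q = e1 + e2" and "q' = e3 + e4"
  have D: "0 < det2 q q'"
    using order by (simp add: q_def q'_def)
  have q_near: "norm (q - 2 *\<^sub>R p) \<le> 2 * \<epsilon>" "norm (q' - 2 *\<^sub>R p) \<le> 2 * \<epsilon>"
    using near unfolding q_def q'_def by (auto intro!: norm_add_sub_double_le)
  define t s where "t = p \<bullet> q' / det2 q q'" and "s = p \<bullet> q / det2 q q'"
  have "0 \<le> p \<bullet> q" "0 \<le> p \<bullet> q'"
    using inner_ge_if_near_double[OF q_near(1)] inner_ge_if_near_double[OF q_near(2)] \<epsilon>(2)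
    by (auto intro: order_trans[OF zero_le_power2])
  then have "0 \<le> t" "0 \<le> s"
    using D by (simp_all add: t_def s_def)
  moreover have "rot90 p = t *\<^sub>R q - s *\<^sub>R q'"
    unfolding t_def s_def using D by (intro rot90_cramer) simp
  moreover have "rot90 p \<noteq> 0"
    using det2_rot90_left[of p p] p(1) by auto
  ultimately have "t *\<^sub>R q \<in> elementary_hull \<gamma> {0, rot90 p}"
    using near unfolding q_def q'_def
    by (intro mem_elementary_hull_origin_pair[OF S gb _ _ _ _ order, where s = s]) auto
  moreover have "(norm p)\<^sup>2 / (12 * \<epsilon>) \<le> norm (t *\<^sub>R q)"
    using far_point_estimate[OF D q_near] \<epsilon>(2) \<open>0 \<le> t\<close> by (simp add: t_def[symmetric])
  ultimately show ?thesis
    by blast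
qed

lemma elementary_hull_unbounded_at_extreme_limit:
  fixes \<gamma> :: "real^2 \<Rightarrow> real"
  assumes S: "convex S" "compact S" "0 \<in> interior S" and gb: "gauge_ball \<gamma> = S"
    and p: "p \<noteq> 0" "p islimpt {x. x extreme_point_of S}"
  shows "\<not> bounded (elementary_hull \<gamma> {0, rot90 p})"
proof
  assume "bounded (elementary_hull \<gamma> {0, rot90 p})"
  then obtain M where M: "0 < M" "\<And>y. y \<in> elementary_hull \<gamma> {0, rot90 p} \<Longrightarrow> norm y \<le> M"
    by (auto simp: bounded_pos)
  define \<epsilon> where "\<epsilon> = min (norm p / 4) ((norm p)\<^sup>2 / (12 * (M + 1)))"
  have "0 < \<epsilon>"
    using p(1) M(1) by (simp add: \<epsilon>_def)
  moreover have "2 * \<epsilon> \<le> norm p"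
    using min.cobounded1[of "norm p / 4" "(norm p)\<^sup>2 / (12 * (M + 1))"] norm_ge_zero[of p]
    unfolding \<epsilon>_def by linarith
  ultimately obtain y where y: "y \<in> elementary_hull \<gamma> {0, rot90 p}" "(norm p)\<^sup>2 / (12 * \<epsilon>) \<le> norm y"
    using elementary_hull_far_point[OF S gb p] by blast
  have "\<epsilon> * (12 * (M + 1)) \<le> (norm p)\<^sup>2"
    using M(1) min.cobounded2[of "norm p / 4" "(norm p)\<^sup>2 / (12 * (M + 1))"]
    by (simp add: \<epsilon>_def le_divide_eq)
  then have "M + 1 \<le> (norm p)\<^sup>2 / (12 * \<epsilon>)"
    using \<open>0 < \<epsilon>\<close> by (simp add: le_divide_eq algebra_simps)
  then show False
    using y M(2) by fastforce
qed

theorem mainTheorem16: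
  fixes \<gamma> :: "real^2 \<Rightarrow> real"
  assumes "is_gauge \<gamma>" and "\<not> polyhedral_gauge \<gamma>"
  shows "\<exists>a b :: real^2. \<not> bounded (elementary_hull \<gamma> {a, b})"
proof -
  obtain S :: "(real^2) set" where S: "convex S" "compact S" "0 \<in> interior S"
    and \<gamma>: "\<gamma> = minkowski_functional S"
    using assms(1) unfolding is_gauge_def by blast
  have gb: "gauge_ball \<gamma> = S"
    unfolding \<gamma> by (rule gauge_ball_minkowski_functional[OF S])
  then have "\<not> polytope S"
    using assms(2) by (simp add: polyhedral_gauge_def)
  then obtain p where "p \<noteq> 0" "p islimpt {x. x extreme_point_of S}"
    by (rule extreme_points_accumulate_off_origin[OF S])
  then show ?thesis
    using elementary_hull_unbounded_at_extreme_limit[OF S gb] by blast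
qed

end
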